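(* For any $\vec x,\vec y,\vec z,\vec w,\vec u,\vec v,\vec s,\vec t\in\Lambda_G$, $$\det\begin{pmatrix}\vec x\cdot\vec u&\vec x\cdot\vec v&\vec x\cdot\vec s&\vec x\cdot\vec t\\ \vec y\cdot\vec u&\vec y\cdot\vec v&\vec y\cdot\vec s&\vec y\cdot\vec t\\ \vec z\cdot\vec u&\vec z\cdot\vec v&\vec z\cdot\vec s&\vec z\cdot\vec t\\ \vec w\cdot\vec u&\vec w\cdot\vec v&\vec w\cdot\vec s&\vec w\cdot\vec t\end{pmatrix}=0\quad\text{in }\kappa G^\#.$$
   Context: Let $\kappa$ be a field of characteristic $0$ and $G$ a group. Let $*:\kappa G\to\kappa G$ be the $\kappa$-linear map with $g^*=g^{-1}$, $(\kappa G)^*$ its fixed points, and $A_G$ the quotient of $\kappa G$ by the two-sided ideal generated by all $ab-ba$, $a\in\kappa G$, $b\in(\kappa G)^*$; $*$ descends to $A_G$. Let $\kappa G^\#=\{x\in A_G:x^*=x\}$ and $\Lambda_G=\{x\in A_G:x^*=-x\}$. For $\vec x,\vec y\in\Lambda_G$ define $\vec x\cdot\vec y=-\tfrac12(\vec x\vec y+\vec y\vec x)\in\kappa G^\#$. *)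

theory Defs
  imports "HOL-Library.Poly_Mapping" "HOL-Combinatorics.Permutations"
begin

text \<open>Group algebra kappa G: finitely supported functions G -> kappa, with
  convolution product.  The (possibly non-abelian) group G is a type of class
  group_add (written additively: g + h is the group product, - g the inverse,
  0 the identity).  single g c is the element c g of kappa G.\<close>

type_synonym ('g, 'k) grpalg = "'g \<Rightarrow>\<^sub>0 'k"

definition star :: "('g::group_add, 'k::field_char_0) grpalg \<Rightarrow> ('g, 'k) grpalg" where
  "star x = (\<Sum>g\<in>Poly_Mapping.keys x. Poly_Mapping.single (- g) (Poly_Mapping.lookup x g))"

definition scal :: "'k::field_char_0 \<Rightarrow> ('g::group_add, 'k) grpalg \<Rightarrow> ('g, 'k) grpalg" where
  "scal c x = Poly_Mapping.map (\<lambda>a. c * a) x"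

text \<open>A_G is the quotient of kappa G by this ideal; elements of A_G are represented
  by elements of kappa G, and equality in A_G is congruence modulo AG_ideal.\<close>
inductive_set AG_ideal :: "('g::group_add, 'k::field_char_0) grpalg set" where
  gen: "star b = b \<Longrightarrow> a * b - b * a \<in> AG_ideal"
| zero: "0 \<in> AG_ideal"
| add: "x \<in> AG_ideal \<Longrightarrow> y \<in> AG_ideal \<Longrightarrow> x + y \<in> AG_ideal"
| mult: "x \<in> AG_ideal \<Longrightarrow> r * x * s \<in> AG_ideal"

text \<open>x represents an element of Lambda_G: x* = -x in A_G.\<close>
definition in_Lambda :: "('g::group_add, 'k::field_char_0) grpalg \<Rightarrow> bool" where
  "in_Lambda x \<longleftrightarrow> star x + x \<in> AG_ideal"

definition dot :: "('g::group_add, 'k::field_char_0) grpalg \<Rightarrow> ('g, 'k) grpalg \<Rightarrow> ('g, 'k) grpalg" where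
  "dot x y = scal (- 1 / 2) (x * y + y * x)"

text \<open>Leibniz determinant of a 4x4 matrix (indices 0..3), products taken in
  row order (entries of the matrices considered commute in A_G).\<close>
definition det4 :: "(nat \<Rightarrow> nat \<Rightarrow> 'a::ring_1) \<Rightarrow> 'a" where
  "det4 M = (\<Sum>p\<in>{p. p permutes {0..<4::nat}}.
      of_int (sign p) * (M 0 (p 0) * M 1 (p 1) * M 2 (p 2) * M 3 (p 3)))"

end

theory Submission
  imports Defs
begin

(* Write {a,b} = ab + ba, [a,b] = ab - ba and tau(a,b,c) = abc - cba.
   In A_G every self-adjoint element is central (A_G commutes with (kappa G)*, and
   every element splits into a self-adjoint and an anti-self-adjoint part, the latter
   being 0 in A_G).  For a, b, c in Lambda_G both {a,b} and tau(a,b,c) are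
   self-adjoint, hence central.

   There the iterated
   bracket  {a3, [a2, {a1, [a0, [b3, tau(b0,b1,b2)]]}]}  is computed to be -4 times
   the 4x4 determinant of the matrix ({ai,bj}); this is a Laplace expansion in which
   each bracket peels off one row.  If tau(b0,b1,b2) is central, the innermost
   commutator vanishes, so 4 det = 0.

   Since x.y = -1/2 {x,y} and A_G has no additive
   torsion, the main theorem follows. *)

subsection \<open>Brackets in an arbitrary ring\<close>

definition central :: "'a::ring \<Rightarrow> bool" where
  "central c \<longleftrightarrow> (\<forall>r. c * r = r * c)"

definition anticomm :: "'a::ring \<Rightarrow> 'a \<Rightarrow> 'a" where
  "anticomm a b = a * b + b * a"

definition commutator :: "'a::ring \<Rightarrow> 'a \<Rightarrow> 'a" where
  "commutator a b = a * b - b * a"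

definition tau :: "'a::ring \<Rightarrow> 'a \<Rightarrow> 'a \<Rightarrow> 'a" where
  "tau a b c = a * b * c - c * b * a"

lemma central_left_commute: "central c \<Longrightarrow> p * (c * q) = c * (p * q)"
  unfolding central_def by (metis mult.assoc)

lemma central_commute: "central c \<Longrightarrow> p * c = c * p"
  unfolding central_def by metis

lemma central_numeral: "central (numeral n :: 'a::ring_1)"
  unfolding central_def by (metis mult_of_nat_commute of_nat_numeral)

lemma central_uminus: "central c \<Longrightarrow> central (- c)"
  unfolding central_def by simp

lemma central_mult: "central c \<Longrightarrow> central d \<Longrightarrow> central (c * d)"
  unfolding central_def by (metis mult.assoc)

lemma anticomm_add: "anticomm p (X + Y) = anticomm p X + anticomm p Y"
  and anticomm_diff: "anticomm p (X - Y) = anticomm p X - anticomm p Y"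
  and anticomm_uminus: "anticomm p (- X) = - anticomm p X"
  and commutator_add: "commutator p (X + Y) = commutator p X + commutator p Y"
  and commutator_diff: "commutator p (X - Y) = commutator p X - commutator p Y"
  and commutator_uminus: "commutator p (- X) = - commutator p X"
  by (simp_all add: anticomm_def commutator_def algebra_simps)

lemma anticomm_central_left: "central c \<Longrightarrow> anticomm p (c * X) = c * anticomm p X"
  and commutator_central_left: "central c \<Longrightarrow> commutator p (c * X) = c * commutator p X"
  by (simp_all add: anticomm_def commutator_def central_left_commute mult.assoc
      distrib_left right_diff_distrib)

lemma commutator_mult: "commutator x (p * q) = anticomm x p * q - p * anticomm x q"
  by (simp add: anticomm_def commutator_def algebra_simps)

lemma anticomm_mult: "anticomm x (p * q) = anticomm x p * q - p * commutator x q"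
  by (simp add: anticomm_def commutator_def algebra_simps)

lemma commutator_commutator_general:
  fixes x d T :: "'a::ring_1"
  assumes "central (anticomm x d)"
  shows "commutator x (commutator d T) = 2 * anticomm x d * T - anticomm d (anticomm x T)"
proof -
  have "commutator x (commutator d T) =
      anticomm x d * T - d * anticomm x T - (anticomm x T * d - T * anticomm x d)"
    by (simp add: commutator_def[of d T] commutator_diff commutator_mult)
  then show ?thesis
    using central_commute[OF assms, of T]
    by (simp add: anticomm_def[of d] mult_2 algebra_simps)
qed

lemma det4_cofactor:
  fixes M :: "nat \<Rightarrow> nat \<Rightarrow> 'a::ring_1"
  shows "det4 M =
      M 0 0 * (M 1 1 * (M 2 2 * M 3 3 - M 2 3 * M 3 2) - M 1 2 * (M 2 1 * M 3 3 - M 2 3 * M 3 1)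
               + M 1 3 * (M 2 1 * M 3 2 - M 2 2 * M 3 1))
    - M 0 1 * (M 1 0 * (M 2 2 * M 3 3 - M 2 3 * M 3 2) - M 1 2 * (M 2 0 * M 3 3 - M 2 3 * M 3 0)
               + M 1 3 * (M 2 0 * M 3 2 - M 2 2 * M 3 0))
    + M 0 2 * (M 1 0 * (M 2 1 * M 3 3 - M 2 3 * M 3 1) - M 1 1 * (M 2 0 * M 3 3 - M 2 3 * M 3 0)
               + M 1 3 * (M 2 0 * M 3 1 - M 2 1 * M 3 0))
    - M 0 3 * (M 1 0 * (M 2 1 * M 3 2 - M 2 2 * M 3 1) - M 1 1 * (M 2 0 * M 3 2 - M 2 2 * M 3 0)
               + M 1 2 * (M 2 0 * M 3 1 - M 2 1 * M 3 0))"
proof -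
  have S: "{0..<4::nat} = insert 0 (insert 1 (insert 2 (insert 3 {})))" by auto
  have P0: "{p. p permutes ({}::nat set)} = {id}" by auto
  have SG: "\<And>f. sum f {id::nat\<Rightarrow>nat} = f id" by simp
  show ?thesis
    unfolding det4_def S
    apply (subst sum_over_permutations_insert, simp, simp)+
    apply (simp only: P0 SG comp_id)
    apply (simp only: sign_compose permutation_compose permutation_swap_id sign_swap_id)
    by (simp add: algebra_simps)
qed

lemma central_power: "central h \<Longrightarrow> central (h ^ n :: 'a::ring_1)"
proof (induction n)
  case 0
  then show ?case by (simp add: central_def)
next
  case (Suc n)
  then show ?case by (simp only: power_Suc central_mult)
qed

lemma central_power_mult:
  fixes h :: "'a::ring_1"
  assumes "central h"
  shows "(h ^ m * a) * (h ^ n * b) = h ^ (m + n) * (a * b)"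
proof -
  have "(h ^ m * a) * (h ^ n * b) = h ^ m * (a * (h ^ n * b))"
    by (simp only: mult.assoc)
  also have "\<dots> = h ^ m * (h ^ n * (a * b))"
    by (simp only: central_left_commute[OF central_power[OF assms], of a])
  finally show ?thesis
    by (simp only: power_add mult.assoc)
qed

lemma det4_scale:
  fixes h :: "'a::ring_1"
  assumes "central h"
  shows "det4 (\<lambda>i j. h * M i j) = h ^ 4 * det4 M"
proof -
  have scale: "(h * a) * (h * b) * (h * c) * (h * d) = h ^ 4 * (a * b * c * d)" for a b c d
  proof -
    have "(h * a) * (h * b) * (h * c) * (h * d) = (h ^ 1 * a) * (h ^ 1 * b) * (h ^ 1 * c) * (h ^ 1 * d)"
      by simp
    also have "\<dots> = h ^ (1 + 1 + 1 + 1) * (a * b * c * d)"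
      by (simp only: central_power_mult[OF assms])
    finally show ?thesis by (simp only: one_add_one numeral_plus_one semiring_norm)
  qed
  have sign: "of_int k * (h ^ 4 * q) = h ^ 4 * (of_int k * q)" for k q
    by (metis mult.assoc mult_of_int_commute)
  show ?thesis
    unfolding det4_def sum_distrib_left by (simp only: scale sign)
qed

subsection \<open>Rings in which anticommutators are central\<close>

locale central_anticommutators =
  fixes V :: "'a::ring_1 set"
  assumes anticomm_central: "a \<in> V \<Longrightarrow> b \<in> V \<Longrightarrow> central (anticomm a b)"
begin

lemma commutator_commutator:
  assumes "z \<in> V" "a \<in> V" "b \<in> V"
  shows "commutator z (commutator a b) = 2 * (anticomm z a * b - anticomm z b * a)"
proof -
  have "commutator z (commutator a b) =
      anticomm z a * b - a * anticomm z b - (anticomm z b * a - b * anticomm z a)"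
    by (simp add: commutator_def[of a b] commutator_diff commutator_mult)
  then show ?thesis
    using central_commute[OF anticomm_central[OF assms(1,2)], of b]
      central_commute[OF anticomm_central[OF assms(1,3)], of a]
    by (simp add: algebra_simps mult_2)
qed

lemma anticomm_triple:
  assumes "y \<in> V" "b \<in> V" "c \<in> V"
  shows "anticomm y (a * b * c) =
    anticomm y a * (b * c) - anticomm y b * (a * c) + anticomm y c * (a * b)"
proof -
  have yb: "central (anticomm y b)" and yc: "central (anticomm y c)"
    using anticomm_central assms by auto
  have "anticomm y (a * b * c) = anticomm y a * (b * c) - a * (anticomm y b * c - b * anticomm y c)"
    by (simp add: mult.assoc anticomm_mult commutator_mult)
  also have "\<dots> = anticomm y a * (b * c) - anticomm y b * (a * c) + anticomm y c * (a * b)"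
    by (simp add: right_diff_distrib central_commute[OF yc, of b] central_commute[OF yb, of a]
        central_commute[OF yc, of a] mult.assoc[symmetric])
  finally show ?thesis .
qed

lemma anticomm_tau:
  assumes "y \<in> V" "a \<in> V" "b \<in> V" "c \<in> V"
  shows "anticomm y (tau a b c) =
    anticomm y a * commutator b c - anticomm y b * commutator a c + anticomm y c * commutator a b"
  unfolding tau_def anticomm_diff anticomm_triple[OF assms(1,3,4)] anticomm_triple[OF assms(1,3,2)]
  by (simp add: commutator_def algebra_simps)

text \<open>{d,[b,c]} = 2 tau(b,c,d): both sides differ by d{b,c} - {b,c}d.\<close>

lemma anticomm_commutator:
  assumes "b \<in> V" "c \<in> V"
  shows "anticomm d (commutator b c) = 2 * tau b c d"
  using central_commute[OF anticomm_central[OF assms], of d]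
  by (simp add: anticomm_def commutator_def tau_def algebra_simps mult_2)

lemma commutator_commutator_tau:
  assumes "x \<in> V" "a \<in> V" "b \<in> V" "c \<in> V" "d \<in> V"
  shows "commutator x (commutator d (tau a b c)) =
    - 2 * (anticomm x a * tau b c d - anticomm x b * tau a c d
           + anticomm x c * tau a b d - anticomm x d * tau a b c)"
  unfolding commutator_commutator_general[OF anticomm_central[OF assms(1,5)]]
    anticomm_tau[OF assms(1-4)]
  using assms
  by (simp add: anticomm_add anticomm_diff anticomm_central_left anticomm_central
      anticomm_commutator central_left_commute[OF central_numeral] algebra_simps)

lemma laplace_chain:
  assumes "\<forall>i<4. a i \<in> V" "\<forall>j<4. b j \<in> V"
  shows "anticomm (a 3) (commutator (a 2) (anticomm (a 1) (commutator (a 0)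
           (commutator (b 3) (tau (b 0) (b 1) (b 2)))))) = - 4 * det4 (\<lambda>i j. anticomm (a i) (b j))"
proof -
  have V: "a 0 \<in> V" "a 1 \<in> V" "a 2 \<in> V" "a 3 \<in> V" "b 0 \<in> V" "b 1 \<in> V" "b 2 \<in> V" "b 3 \<in> V"
    using assms by auto
  show ?thesis
    using V
    apply (simp only: commutator_commutator_tau anticomm_tau commutator_commutator
      anticomm_add anticomm_diff anticomm_uminus anticomm_central_left commutator_add commutator_diff
      commutator_uminus commutator_central_left central_numeral central_uminus central_mult
      anticomm_central)
    apply (simp only: central_left_commute[OF central_numeral] right_diff_distrib[symmetric]
        distrib_left[symmetric] det4_cofactor)
    by simp
qed

text \<open>If moreover tau(b0,b1,b2) is central, the innermost commutator of the chain is 0.\<close>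

lemma four_det4_eq_zero:
  assumes "\<forall>i<4. a i \<in> V" "\<forall>j<4. b j \<in> V" and "central (tau (b 0) (b 1) (b 2))"
  shows "4 * det4 (\<lambda>i j. anticomm (a i) (b j)) = 0"
proof -
  have "commutator (b 3) (tau (b 0) (b 1) (b 2)) = 0"
    using central_commute[OF assms(3)] by (simp add: commutator_def)
  then have "- 4 * det4 (\<lambda>i j. anticomm (a i) (b j)) = 0"
    using laplace_chain[OF assms(1,2)] by (simp add: anticomm_def commutator_def)
  then show ?thesis by simp
qed

end

subsection \<open>The group algebra\<close>

lemma poly_mapping_decompose:
  "(x :: 'a \<Rightarrow>\<^sub>0 'b::comm_monoid_add) = (\<Sum>g\<in>Poly_Mapping.keys x. Poly_Mapping.single g (Poly_Mapping.lookup x g))"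
  by (rule poly_mapping_eqI) (simp add: lookup_sum lookup_single when_def in_keys_iff)

lemma mult_expand:
  "(x :: 'a::monoid_add \<Rightarrow>\<^sub>0 'b::semiring_0) * y =
    (\<Sum>g\<in>Poly_Mapping.keys x. \<Sum>h\<in>Poly_Mapping.keys y.
       Poly_Mapping.single (g + h) (Poly_Mapping.lookup x g * Poly_Mapping.lookup y h))"
  by (subst poly_mapping_decompose[of x], subst poly_mapping_decompose[of y],
      simp add: sum_distrib_left sum_distrib_right mult_single) (rule sum.swap)

lemma single_zero_commute:
  "Poly_Mapping.single 0 c * x = x * Poly_Mapping.single 0 c"
  for x :: "'a::monoid_add \<Rightarrow>\<^sub>0 'k::comm_semiring_0"
  by (simp add: mult_expand mult.commute)

lemma lookup_star: "Poly_Mapping.lookup (star x) h = Poly_Mapping.lookup x (- h)"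
proof -
  have "Poly_Mapping.lookup (star x) h =
      (\<Sum>g\<in>Poly_Mapping.keys x. (Poly_Mapping.lookup x g when - g = h))"
    by (simp add: star_def lookup_sum lookup_single)
  also have "\<dots> = (\<Sum>g\<in>Poly_Mapping.keys x. (Poly_Mapping.lookup x g when g = - h))"
    by (rule sum.cong) (auto simp: when_def)
  also have "\<dots> = Poly_Mapping.lookup x (- h)"
    by (cases "- h \<in> Poly_Mapping.keys x") (auto simp: when_def in_keys_iff intro: sum.neutral)
  finally show ?thesis .
qed

lemma star_star: "star (star x) = x"
  and star_add: "star (x + y) = star x + star y"
  and star_diff: "star (x - y) = star x - star y"
  and star_single: "star (Poly_Mapping.single g c) = Poly_Mapping.single (- g) c"
  and star_sum: "star (sum f A) = (\<Sum>a\<in>A. star (f a))"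
  by (rule poly_mapping_eqI; auto simp: lookup_star lookup_add lookup_minus lookup_single
      lookup_sum when_def)+

lemma star_mult: "star (x * y) = star y * star x"
proof -
  have "star (x * y) = (\<Sum>g\<in>Poly_Mapping.keys x. \<Sum>h\<in>Poly_Mapping.keys y.
      Poly_Mapping.single (- h + - g) (Poly_Mapping.lookup x g * Poly_Mapping.lookup y h))"
    by (simp add: mult_expand star_sum star_single minus_add)
  also have "\<dots> = star y * star x"
    by (subst poly_mapping_decompose[of x], subst poly_mapping_decompose[of y])
      (simp add: star_sum star_single sum_distrib_left sum_distrib_right mult_single
        sum.swap[of _ "Poly_Mapping.keys y"] mult.commute)
  finally show ?thesis .
qed

text \<open>The augmentation map kappa G -> kappa (sum of coefficients) is a ring homomorphism;
  it vanishes on the ideal defining A_G, so A_G is not the zero ring.\<close>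

definition augmentation :: "('a \<Rightarrow>\<^sub>0 'b::comm_monoid_add) \<Rightarrow> 'b" where
  "augmentation x = (\<Sum>g\<in>Poly_Mapping.keys x. Poly_Mapping.lookup x g)"

lemma augmentation_superset:
  "finite S \<Longrightarrow> Poly_Mapping.keys x \<subseteq> S \<Longrightarrow> augmentation x = sum (Poly_Mapping.lookup x) S"
  unfolding augmentation_def by (rule sum.mono_neutral_left) (auto simp: in_keys_iff)

lemma augmentation_zero: "augmentation 0 = 0"
  by (simp add: augmentation_def)

lemma augmentation_add: "augmentation (x + y) = augmentation x + augmentation y"
  using keys_add[of x y]
  by (simp add: augmentation_superset[of "Poly_Mapping.keys x \<union> Poly_Mapping.keys y"]
      lookup_add sum.distrib)

lemma augmentation_diff: "augmentation (x - y) = augmentation x - augmentation (y :: 'a \<Rightarrow>\<^sub>0 'b::ab_group_add)"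
  using keys_diff[of x y]
  by (simp add: augmentation_superset[of "Poly_Mapping.keys x \<union> Poly_Mapping.keys y"]
      lookup_minus sum_subtractf)

lemma augmentation_single: "augmentation (Poly_Mapping.single g c) = c"
  by (simp add: augmentation_superset[of "{g}"])

lemma augmentation_sum: "augmentation (sum f A) = (\<Sum>a\<in>A. augmentation (f a))"
  by (induction A rule: infinite_finite_induct) (simp_all add: augmentation_zero augmentation_add)

lemma augmentation_mult:
  "augmentation (x * y) = augmentation x * augmentation (y :: 'a::monoid_add \<Rightarrow>\<^sub>0 'b::semiring_0)"
  unfolding mult_expand augmentation_sum augmentation_single by (simp add: augmentation_def sum_product)

lemma augmentation_AG_ideal: "x \<in> AG_ideal \<Longrightarrow> augmentation x = 0"
  by (induction rule: AG_ideal.induct)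
    (simp_all add: augmentation_diff augmentation_mult augmentation_add augmentation_zero mult.commute)

lemma one_notin_AG_ideal: "(1 :: ('g::group_add, 'k::field_char_0) grpalg) \<notin> AG_ideal"
  using augmentation_AG_ideal augmentation_single[of "0 :: 'g" "1 :: 'k"] by fastforce

lemma AG_ideal_uminus: "x \<in> AG_ideal \<Longrightarrow> - x \<in> AG_ideal"
  using AG_ideal.mult[of x "- 1" 1] by simp

lemma AG_ideal_diff: "x \<in> AG_ideal \<Longrightarrow> y \<in> AG_ideal \<Longrightarrow> x - y \<in> AG_ideal"
  using AG_ideal.add[OF _ AG_ideal_uminus, of x y] by simp

lemma AG_ideal_mult_left: "x \<in> AG_ideal \<Longrightarrow> r * x \<in> AG_ideal"
  and AG_ideal_mult_right: "x \<in> AG_ideal \<Longrightarrow> x * s \<in> AG_ideal"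
  using AG_ideal.mult[of x r 1] AG_ideal.mult[of x 1 s] by simp_all

subsection \<open>The quotient ring A_G\<close>

definition AG_equiv :: "('g::group_add, 'k::field_char_0) grpalg \<Rightarrow> ('g, 'k) grpalg \<Rightarrow> bool" where
  "AG_equiv x y \<longleftrightarrow> x - y \<in> AG_ideal"

lemma AG_equiv_equivp: "equivp AG_equiv"
proof (rule equivpI)
  show "reflp AG_equiv"
    by (rule reflpI) (simp add: AG_equiv_def AG_ideal.zero)
  show "symp AG_equiv"
    by (rule sympI) (metis AG_equiv_def AG_ideal_uminus minus_diff_eq)
  show "transp AG_equiv"
  proof (rule transpI)
    fix x y z
    assume "AG_equiv x y" "AG_equiv y z"
    then have "(x - y) + (y - z) \<in> AG_ideal" unfolding AG_equiv_def by (rule AG_ideal.add)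
    then show "AG_equiv x z" by (simp add: AG_equiv_def)
  qed
qed

quotient_type (overloaded) ('g, 'k) AG = "('g::group_add, 'k::field_char_0) grpalg" / AG_equiv
  by (rule AG_equiv_equivp)

instantiation AG :: (group_add, field_char_0) ring_1
begin

lift_definition zero_AG :: "('a, 'b) AG" is 0 .
lift_definition one_AG :: "('a, 'b) AG" is 1 .
lift_definition plus_AG :: "('a, 'b) AG \<Rightarrow> ('a, 'b) AG \<Rightarrow> ('a, 'b) AG" is "(+)"
  unfolding AG_equiv_def by (drule (1) AG_ideal.add) (simp add: algebra_simps)
lift_definition uminus_AG :: "('a, 'b) AG \<Rightarrow> ('a, 'b) AG" is uminus
  unfolding AG_equiv_def by (drule AG_ideal_uminus) (simp add: algebra_simps)
lift_definition minus_AG :: "('a, 'b) AG \<Rightarrow> ('a, 'b) AG \<Rightarrow> ('a, 'b) AG" is "(-)"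
  unfolding AG_equiv_def by (drule (1) AG_ideal_diff) (simp add: algebra_simps)
lift_definition times_AG :: "('a, 'b) AG \<Rightarrow> ('a, 'b) AG \<Rightarrow> ('a, 'b) AG" is "(*)"
proof -
  fix a b c d :: "('a, 'b) grpalg"
  assume "AG_equiv a b" "AG_equiv c d"
  then have "(a - b) * c + b * (c - d) \<in> AG_ideal"
    unfolding AG_equiv_def by (intro AG_ideal.add AG_ideal_mult_left AG_ideal_mult_right)
  then show "AG_equiv (a * c) (b * d)"
    by (simp add: AG_equiv_def algebra_simps)
qed

instance
proof
  fix a b c :: "('a, 'b) AG"
  show "a * b * c = a * (b * c)" by transfer (simp add: AG_equiv_def AG_ideal.zero mult.assoc)
  show "1 * a = a" by transfer (simp add: AG_equiv_def AG_ideal.zero)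
  show "a * 1 = a" by transfer (simp add: AG_equiv_def AG_ideal.zero)
  show "a + b + c = a + (b + c)" by transfer (simp add: AG_equiv_def AG_ideal.zero add.assoc)
  show "a + b = b + a" by transfer (simp add: AG_equiv_def AG_ideal.zero add.commute)
  show "0 + a = a" by transfer (simp add: AG_equiv_def AG_ideal.zero)
  show "- a + a = 0" by transfer (simp add: AG_equiv_def AG_ideal.zero)
  show "a - b = a + - b" by transfer (simp add: AG_equiv_def AG_ideal.zero)
  show "(a + b) * c = a * c + b * c" by transfer (simp add: AG_equiv_def AG_ideal.zero distrib_right)
  show "a * (b + c) = a * b + a * c" by transfer (simp add: AG_equiv_def AG_ideal.zero distrib_left)
  show "(0 :: ('a, 'b) AG) \<noteq> 1"
    by transfer (metis AG_equiv_def AG_ideal_uminus diff_0 minus_minus one_notin_AG_ideal)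
qed

end

lemma abs_AG_add: "abs_AG (a + b) = abs_AG a + abs_AG b"
  and abs_AG_diff: "abs_AG (a - b) = abs_AG a - abs_AG b"
  and abs_AG_uminus: "abs_AG (- a) = - abs_AG a"
  and abs_AG_mult: "abs_AG (a * b) = abs_AG a * abs_AG b"
  and abs_AG_zero: "abs_AG 0 = 0"
  and abs_AG_one: "abs_AG 1 = 1"
  by (simp_all add: plus_AG.abs_eq minus_AG.abs_eq uminus_AG.abs_eq times_AG.abs_eq
      zero_AG_def one_AG_def)

lemma abs_AG_eq_iff: "abs_AG x = abs_AG y \<longleftrightarrow> x - y \<in> AG_ideal"
  by (simp add: AG.abs_eq_iff AG_equiv_def)

lemma abs_AG_surj: "\<exists>r'. r = abs_AG r'"
  by (induction r rule: AG.abs_induct) auto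

lemma abs_AG_sum: "abs_AG (sum f A) = (\<Sum>a\<in>A. abs_AG (f a))"
  by (induction A rule: infinite_finite_induct) (simp_all add: abs_AG_zero abs_AG_add)

lemma abs_AG_of_nat: "abs_AG (of_nat n) = of_nat n"
  by (induction n) (simp_all add: abs_AG_zero abs_AG_one abs_AG_add)

lemma abs_AG_of_int: "abs_AG (of_int k) = of_int k"
  by (cases k rule: int_cases) (simp_all add: abs_AG_of_nat abs_AG_diff abs_AG_uminus abs_AG_one)

lemma abs_AG_det4: "abs_AG (det4 M) = det4 (\<lambda>i j. abs_AG (M i j))"
  unfolding det4_def by (simp add: abs_AG_sum abs_AG_mult abs_AG_of_int)

subsection \<open>Centrality in A_G\<close>

text \<open>An element that is self-adjoint modulo AG_ideal is central in A_G: split c into its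
  self-adjoint part, which commutes with everything by definition of AG_ideal, and an
  anti-self-adjoint part, which lies in AG_ideal.\<close>

lemma selfadjoint_central:
  fixes c :: "('g::group_add, 'k::field_char_0) grpalg"
  assumes "abs_AG (star c) = abs_AG c"
  shows "central (abs_AG c)"
  unfolding central_def
proof
  fix r :: "('g, 'k) AG"
  obtain r' where r: "r = abs_AG r'" using abs_AG_surj by blast
  define h :: "('g, 'k) grpalg" where "h = Poly_Mapping.single 0 (1/2)"
  define b where "b = h * (c + star c)"
  define e where "e = h * (c - star c)"
  have "star b = (star c + c) * h"
    by (simp add: b_def h_def star_mult star_add star_single star_star)
  also have "\<dots> = b"
    by (simp add: b_def h_def single_zero_commute add.commute)
  finally have "r' * b - b * r' \<in> AG_ideal" by (rule AG_ideal.gen)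
  moreover have "e \<in> AG_ideal"
    using assms unfolding e_def abs_AG_eq_iff by (intro AG_ideal_mult_left) (metis AG_ideal_uminus minus_diff_eq)
  then have "r' * e - e * r' \<in> AG_ideal"
    by (intro AG_ideal_diff AG_ideal_mult_left AG_ideal_mult_right)
  ultimately have "(r' * b - b * r') + (r' * e - e * r') \<in> AG_ideal"
    by (rule AG_ideal.add)
  moreover have "c = b + e"
    by (simp add: b_def e_def h_def algebra_simps flip: distrib_right single_add)
  ultimately have "r' * c - c * r' \<in> AG_ideal"
    by (simp add: algebra_simps)
  then show "abs_AG c * r = r * abs_AG c"
    by (metis r abs_AG_eq_iff abs_AG_mult AG_ideal_uminus minus_diff_eq)
qed

text \<open>For a, b, c in Lambda_G the elements {a,b} and tau(a,b,c) are self-adjoint in A_G,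
  hence central.\<close>

lemma Lambda_star: "in_Lambda a \<Longrightarrow> abs_AG (star a) = - abs_AG a"
  by (simp add: in_Lambda_def abs_AG_eq_iff flip: abs_AG_uminus)

lemma Lambda_anticomm_central:
  assumes "in_Lambda a" "in_Lambda b"
  shows "central (anticomm (abs_AG a) (abs_AG b))"
proof -
  have "abs_AG (star (anticomm a b)) = abs_AG (anticomm a b)"
    by (simp add: anticomm_def star_add star_mult abs_AG_add abs_AG_mult Lambda_star assms add.commute)
  then show ?thesis
    by (metis selfadjoint_central anticomm_def abs_AG_add abs_AG_mult)
qed

lemma Lambda_tau_central:
  assumes "in_Lambda a" "in_Lambda b" "in_Lambda c"
  shows "central (tau (abs_AG a) (abs_AG b) (abs_AG c))"
proof -
  have "abs_AG (star (tau a b c)) = abs_AG (tau a b c)"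
    by (simp add: tau_def star_diff star_mult abs_AG_diff abs_AG_mult Lambda_star assms mult.assoc)
  then show ?thesis
    by (metis selfadjoint_central tau_def abs_AG_diff abs_AG_mult)
qed

definition scalar :: "'k::field_char_0 \<Rightarrow> ('g::group_add, 'k) AG" where
  "scalar c = abs_AG (Poly_Mapping.single 0 c)"

lemma central_scalar: "central (scalar c)"
  unfolding central_def scalar_def
  by (metis abs_AG_surj abs_AG_mult single_zero_commute)

lemma abs_AG_dot: "abs_AG (dot a b) = scalar (- 1 / 2) * anticomm (abs_AG a) (abs_AG b)"
  unfolding dot_def scal_def mult_map_scale_conv_mult
  by (simp add: scalar_def anticomm_def abs_AG_add abs_AG_mult)

text \<open>A_G is a vector space over a field of characteristic 0, so it has no additive torsion.\<close>

lemma AG_torsion_free: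
  fixes d :: "('g::group_add, 'k::field_char_0) AG"
  assumes "of_nat n * d = 0" "n > 0"
  shows "d = 0"
proof -
  have "scalar (1 / of_nat n) * of_nat n =
      (abs_AG (Poly_Mapping.single 0 (1 / of_nat n) * Poly_Mapping.single 0 (of_nat n)) :: ('g, 'k) AG)"
    by (simp only: scalar_def abs_AG_mult single_of_nat abs_AG_of_nat)
  also have "\<dots> = 1"
    using assms(2) by (simp only: mult_single) (simp add: abs_AG_one)
  finally have inverse: "scalar (1 / of_nat n) * of_nat n = (1 :: ('g, 'k) AG)" .
  then have "d = scalar (1 / of_nat n) * (of_nat n * d)"
    by (simp add: mult.assoc[symmetric] inverse)
  then show ?thesis using assms(1) by simp
qed

theorem mainTheorem9:
  fixes x y z w u v s t :: "('g::group_add, 'k::field_char_0) grpalg"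
  assumes "in_Lambda x" "in_Lambda y" "in_Lambda z" "in_Lambda w"
    and "in_Lambda u" "in_Lambda v" "in_Lambda s" "in_Lambda t"
  shows "det4 (\<lambda>i j. dot ([x, y, z, w] ! i) ([u, v, s, t] ! j)) \<in> AG_ideal"
proof -
  define V :: "('g, 'k) AG set" where "V = abs_AG ` Collect in_Lambda"
  interpret central_anticommutators V
    by unfold_locales (auto simp: V_def Lambda_anticomm_central)
  define a where "a i = abs_AG ([x, y, z, w] ! i)" for i
  define b where "b j = abs_AG ([u, v, s, t] ! j)" for j
  have "\<forall>i<4. a i \<in> V" "\<forall>j<4. b j \<in> V"
    using assms by (auto simp: a_def b_def V_def less_Suc_eq numeral_eq_Suc)
  moreover have "central (tau (b 0) (b 1) (b 2))"
    by (simp add: b_def Lambda_tau_central assms)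
  ultimately have "of_nat 4 * det4 (\<lambda>i j. anticomm (a i) (b j)) = 0"
    using four_det4_eq_zero by simp
  then have D0: "det4 (\<lambda>i j. anticomm (a i) (b j)) = 0"
    by (rule AG_torsion_free) simp
  have "abs_AG (det4 (\<lambda>i j. dot ([x, y, z, w] ! i) ([u, v, s, t] ! j)))
      = det4 (\<lambda>i j. scalar (- 1 / 2) * anticomm (a i) (b j))"
    by (simp add: abs_AG_det4 abs_AG_dot a_def b_def)
  also have "\<dots> = 0"
    by (simp add: det4_scale[OF central_scalar] D0)
  finally show ?thesis
    by (metis abs_AG_eq_iff abs_AG_zero diff_zero)
qed

end
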